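(* Let $X\in\mathbb{R}^{n\times p}$, $y\in\mathbb{R}^n$, $\lambda>0$, $\alpha>0$, $G=X^\top X+\alpha I_p$, $\tilde y=X^\top y$. Define $F:\mathbb{R}^{2p}\to\mathbb{R}^{2p}$ for $z=(\beta,d)\in\mathbb{R}^p\times\mathbb{R}^p$ by $$F(z)=\begin{pmatrix}\beta-T_\lambda(\beta+d)\\ G\beta+nd-\tilde y\end{pmatrix}.$$ For $w=(\beta,d)$ let $A(w)=\{i:|\beta_i+d_i|\ge\lambda\}$, let $D_w=\operatorname{diag}(\mathbf 1_{\{i\in A(w)\}})_{i=1}^p$, and define the $2p\times2p$ matrix (in $(\beta,d)$-block coordinates) $$H(w)=\begin{pmatrix} I_p-D_w & -D_w\\ G & nI_p\end{pmatrix}.$$ Then $F$ is Newton differentiable at every $z\in\mathbb{R}^{2p}$ with $H(w)$ as a Newton derivative, i.e. $\|F(z+h)-F(z)-H(z+h)h\|_2=o(\|h\|_2)$ as $h\to0$. Furthermore, for every $w$, $H(w)$ is invertible and $$\|H(w)^{-1}\|\le 1+\frac{2\,(n+1+\alpha+\|X\|^2)^2}{\alpha},$$ where $\|\cdot\|$ is the spectral (operator $2$-) norm.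
   Context: $T_\lambda$ is the componentwise soft-threshold operator $T_\lambda(x)_i=\operatorname{sgn}(x_i)\max(|x_i|-\lambda,0)$. Newton differentiability of $F:\mathbb{R}^m\to\mathbb{R}^l$ at $x$: there exist an open neighborhood $N(x)$ and a family $D:N(x)\to\mathbb{R}^{l\times m}$ with $\|F(x+h)-F(x)-D(x+h)h\|_2=o(\|h\|_2)$. (In the coordinate ordering $(d_A,\beta_B,\beta_A,d_B)$ with $A=A(w)$, $B$ its complement, $H(w)$ is the block matrix with rows $[-I_{AA},0,0,0]$, $[0,I_{BB},0,0]$, $[nI_{AA},X_A^\top X_B,G_{AA},0]$, $[0,G_{BB},X_B^\top X_A,nI_{BB}]$.) *)

theory Defs
  imports "HOL-Analysis.Analysis"
begin

text \<open>Vectors in R^{2p} are indexed by the sum type 'p + 'p: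
  index Inl i is the beta-coordinate i, index Inr i is the d-coordinate i.
  The Euclidean norm on real^('p+'p) is the 2-norm of (beta,d).\<close>

definition beta_part :: "real^('p::finite + 'p) \<Rightarrow> real^'p" where
  "beta_part z = (\<chi> i. z $ Inl i)"

definition d_part :: "real^('p::finite + 'p) \<Rightarrow> real^'p" where
  "d_part z = (\<chi> i. z $ Inr i)"

definition soft_thresh :: "real \<Rightarrow> real^'p::finite \<Rightarrow> real^'p" where
  "soft_thresh lam x = (\<chi> i. sgn (x $ i) * max (\<bar>x $ i\<bar> - lam) 0)"

definition Gmat :: "real^'p^'n \<Rightarrow> real \<Rightarrow> real^'p^'p" where
  "Gmat X alpha = transpose X ** X + alpha *\<^sub>R mat 1"

definition Fmap :: "real^'p::finite^'n::finite \<Rightarrow> real^'n \<Rightarrow> real \<Rightarrow> real \<Rightarrow>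
    real^('p + 'p) \<Rightarrow> real^('p + 'p)" where
  "Fmap X y lam alpha z =
     (let b = beta_part z; d = d_part z;
          t = soft_thresh lam (b + d);
          r = Gmat X alpha *v b + real CARD('n) *\<^sub>R d - transpose X *v y
      in (\<chi> k. case k of Inl i \<Rightarrow> b $ i - t $ i | Inr i \<Rightarrow> r $ i))"

definition active_set :: "real \<Rightarrow> real^('p::finite + 'p) \<Rightarrow> 'p set" where
  "active_set lam w = {i. \<bar>beta_part w $ i + d_part w $ i\<bar> \<ge> lam}"

definition Hmat :: "real^'p::finite^'n::finite \<Rightarrow> real \<Rightarrow> real \<Rightarrow>
    real^('p + 'p) \<Rightarrow> real^('p + 'p)^('p + 'p)" where
  "Hmat X lam alpha w =
     (\<chi> r c. case (r, c) of
        (Inl i, Inl j) \<Rightarrow> (if i = j \<and> i \<notin> active_set lam w then 1 else 0)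
      | (Inl i, Inr j) \<Rightarrow> (if i = j \<and> i \<in> active_set lam w then -1 else 0)
      | (Inr i, Inl j) \<Rightarrow> Gmat X alpha $ i $ j
      | (Inr i, Inr j) \<Rightarrow> (if i = j then real CARD('n) else 0))"

end

theory Submission imports Defs begin

text \<open>
  The residual of the Newton derivative vanishes identically near every point: in one variable,
  the soft threshold agrees with its linearisation by the indicator of \<open>\<bar>u + k\<bar> \<ge> \<lambda>\<close> for all small
  \<open>k\<close>, even at the kinks \<open>\<bar>u\<bar> = \<lambda>\<close>.

  For the bound on \<open>H(w)\<^sup>-\<^sup>1\<close>, write \<open>H(w)(\<beta>, d) = (r, s)\<close>. Then \<open>\<beta> = r\<close> off the active set \<open>A\<close>
  and \<open>d = -r\<close> on \<open>A\<close>. Pairing \<open>s = G\<beta> + n d\<close> with the restriction \<open>\<beta>\<^sub>A\<close> turns the term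
  \<open>n\<langle>\<beta>\<^sub>A, d\<rangle>\<close> into \<open>-n\<langle>\<beta>\<^sub>A, r\<rangle>\<close>, and \<open>G \<ge> \<alpha>I\<close> bounds \<open>\<beta>\<^sub>A\<close>, hence \<open>\<beta>\<close>; pairing \<open>s\<close> with \<open>d\<close>
  then bounds \<open>d\<close>.
\<close>

lemma sum_UNIV_Plus:
  "(\<Sum>k\<in>(UNIV::('a::finite + 'b::finite) set). f k) = (\<Sum>i\<in>UNIV. f (Inl i)) + (\<Sum>j\<in>UNIV. f (Inr j))"
  using sum.Plus[of "UNIV::'a set" "UNIV::'b set" f] by (simp add: comp_def)

lemma sum_if_eq_mult: "(\<Sum>j\<in>UNIV. (if i = j then c else 0) * f j) = c * (f (i::'a::finite) :: real)"
  by (simp add: if_distrib[of "\<lambda>t. t * _"] cong: if_cong)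

lemma beta_part_add: "beta_part (a + b) = beta_part a + beta_part b"
  by (simp add: beta_part_def vec_eq_iff)

lemma d_part_add: "d_part (a + b) = d_part a + d_part b"
  by (simp add: d_part_def vec_eq_iff)

lemma norm_power2_beta_d_part:
  "(norm (x::real^('p::finite+'p)))\<^sup>2 = (norm (beta_part x))\<^sup>2 + (norm (d_part x))\<^sup>2"
  by (simp add: power2_norm_eq_inner inner_vec_def sum_UNIV_Plus beta_part_def d_part_def)

lemma norm_beta_part_le: "norm (beta_part x) \<le> norm x"
  by (rule power2_le_imp_le) (simp_all add: norm_power2_beta_d_part)

lemma norm_d_part_le: "norm (d_part x) \<le> norm x"
  by (rule power2_le_imp_le) (simp_all add: norm_power2_beta_d_part)

lemma norm_le_beta_part_plus_d_part: "norm x \<le> norm (beta_part x) + norm (d_part x)"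
  by (rule power2_le_imp_le) (simp_all add: norm_power2_beta_d_part power2_sum)

lemma Hmat_mult_Inl:
  "(Hmat X lam alpha w *v x) $ Inl i =
     (if i \<in> active_set lam w then - d_part x $ i else beta_part x $ i)"
  by (auto simp: Hmat_def matrix_vector_mult_def sum_UNIV_Plus beta_part_def d_part_def
      sum_if_eq_mult)

lemma Hmat_mult_Inr:
  fixes X :: "real^'p::finite^'n::finite"
  shows "(Hmat X lam alpha w *v x) $ Inr i =
           (Gmat X alpha *v beta_part x) $ i + real CARD('n) * d_part x $ i"
  by (auto simp: Hmat_def matrix_vector_mult_def sum_UNIV_Plus beta_part_def d_part_def
      sum_if_eq_mult)

lemma beta_part_Hmat_mult:
  "beta_part (Hmat X lam alpha w *v x) $ i =
     (if i \<in> active_set lam w then - d_part x $ i else beta_part x $ i)"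
  by (simp add: Hmat_mult_Inl beta_part_def)

lemma d_part_Hmat_mult:
  fixes X :: "real^'p::finite^'n::finite"
  shows "d_part (Hmat X lam alpha w *v x) =
           Gmat X alpha *v beta_part x + real CARD('n) *\<^sub>R d_part x"
  by (simp add: vec_eq_iff d_part_def Hmat_mult_Inr)

text \<open>Away from the kinks \<open>\<bar>u\<bar> = \<lambda>\<close> the distance to them; at a kink any radius up to \<open>\<lambda>\<close> works.\<close>
definition thresh_radius :: "real \<Rightarrow> real \<Rightarrow> real" where
  "thresh_radius lam u = (if \<bar>u\<bar> = lam then lam else \<bar>\<bar>u\<bar> - lam\<bar>)"

lemma thresh_radius_pos: "lam > 0 \<Longrightarrow> thresh_radius lam u > 0"
  by (auto simp: thresh_radius_def)

lemma soft_thresh_linearisation_exact: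
  assumes "lam > 0" "\<bar>k\<bar> < thresh_radius lam u"
  shows "sgn (u + k) * max (\<bar>u + k\<bar> - lam) 0 - sgn u * max (\<bar>u\<bar> - lam) 0
           = (if lam \<le> \<bar>u + k\<bar> then k else 0)"
  using assms unfolding thresh_radius_def sgn_real_def
  by (auto split: if_splits simp: abs_if max_def)

lemma Fmap_residual_eq_0:
  fixes X :: "real^'p::finite^'n::finite"
  assumes "lam > 0"
    and small: "\<And>i. \<bar>h $ Inl i + h $ Inr i\<bar> < thresh_radius lam (z $ Inl i + z $ Inr i)"
  shows "Fmap X y lam alpha (z + h) - Fmap X y lam alpha z - Hmat X lam alpha (z + h) *v h = 0"
proof (subst vec_eq_iff, intro allI)
  fix k :: "'p + 'p"
  show "(Fmap X y lam alpha (z + h) - Fmap X y lam alpha z - Hmat X lam alpha (z + h) *v h) $ k = 0 $ k"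
  proof (cases k)
    case (Inl i)
    show ?thesis
      using soft_thresh_linearisation_exact[OF assms(1) small[of i]]
      by (simp add: Inl Hmat_mult_Inl Fmap_def Let_def soft_thresh_def beta_part_def
          d_part_def active_set_def algebra_simps)
  next
    case (Inr i)
    show ?thesis
      by (simp add: Inr Hmat_mult_Inr Fmap_def Let_def beta_part_add d_part_add
          matrix_vector_right_distrib algebra_simps)
  qed
qed

lemma Fmap_Newton_differentiable:
  fixes X :: "real^'p::finite^'n::finite"
  assumes "lam > 0"
  shows "((\<lambda>h. norm (Fmap X y lam alpha (z + h) - Fmap X y lam alpha z
                       - Hmat X lam alpha (z + h) *v h) / norm h) \<longlongrightarrow> 0) (at 0)"
proof (rule tendsto_eventually)
  have "\<forall>\<^sub>F h in at 0. \<forall>i. \<bar>h $ Inl i + h $ Inr i\<bar> < thresh_radius lam (z $ Inl i + z $ Inr i)"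
  proof (rule eventually_all_finite)
    fix i
    define \<delta> where "\<delta> = thresh_radius lam (z $ Inl i + z $ Inr i)"
    have "\<delta> > 0" unfolding \<delta>_def using thresh_radius_pos[OF assms] .
    moreover have "\<bar>h $ Inl i + h $ Inr i\<bar> < \<delta>" if "norm h < \<delta> / 2" for h :: "real^('p + 'p)"
      using that component_le_norm_cart[of h "Inl i"] component_le_norm_cart[of h "Inr i"]
      by linarith
    ultimately show "\<forall>\<^sub>F h in at 0. \<bar>h $ Inl i + h $ Inr i\<bar> < \<delta>"
      unfolding eventually_at by (intro exI[of _ "\<delta> / 2"]) auto
  qed
  then show "\<forall>\<^sub>F h in at 0. norm (Fmap X y lam alpha (z + h) - Fmap X y lam alpha z
                               - Hmat X lam alpha (z + h) *v h) / norm h = 0"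
    by eventually_elim (simp add: Fmap_residual_eq_0[OF assms])
qed

lemma inner_transpose_matrix_vector: "inner u (transpose X *v w) = inner (X *v u) (w::real^'n::finite)"
  for X :: "real^'p::finite^'n::finite"
  by (metis transpose_matrix_vector dot_lmul_matrix inner_commute)

lemma inner_Gmat: "inner u (Gmat X alpha *v v) = inner (X *v u) (X *v v) + alpha * inner u v"
  for X :: "real^'p::finite^'n::finite"
proof -
  have "Gmat X alpha *v v = transpose X *v (X *v v) + alpha *\<^sub>R v"
    by (simp add: Gmat_def matrix_vector_mult_add_rdistrib matrix_vector_mul_assoc[symmetric]
        scaleR_matrix_vector_assoc[symmetric])
  then show ?thesis
    by (simp only: inner_add_right inner_transpose_matrix_vector inner_scaleR_right)
qed

lemma abs_inner_matrix_vector_le: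
  "\<bar>inner (X *v u) (X *v v)\<bar> \<le> (onorm (\<lambda>v. X *v v))\<^sup>2 * (norm u * norm v)"
  for X :: "real^'p::finite^'n::finite"
proof -
  let ?N = "onorm (\<lambda>v. X *v v)"
  have "0 \<le> ?N" by (rule onorm_pos_le) simp
  have "\<bar>inner (X *v u) (X *v v)\<bar> \<le> norm (X *v u) * norm (X *v v)" by (rule Cauchy_Schwarz_ineq2)
  also have "\<dots> \<le> (?N * norm u) * (?N * norm v)"
    using \<open>0 \<le> ?N\<close> by (intro mult_mono onorm) simp_all
  finally show ?thesis by (simp add: power2_eq_square algebra_simps)
qed

lemma abs_inner_le_of_norm_le: "norm v \<le> \<rho> \<Longrightarrow> \<bar>inner u v\<bar> \<le> norm u * \<rho>"
  using Cauchy_Schwarz_ineq2[of u v] mult_left_mono[of "norm v" \<rho> "norm u"] by simp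

lemma norm_restrict_le: "norm (\<chi> i. if P i then (f::real^'p::finite) $ i else 0) \<le> norm f"
  unfolding norm_le inner_vec_def by (rule sum_mono) auto

lemma le_divide_of_mult_power2_le:
  "0 \<le> t \<Longrightarrow> 0 \<le> M \<Longrightarrow> (a::real) > 0 \<Longrightarrow> a * t\<^sup>2 \<le> t * M \<Longrightarrow> t \<le> M / a"
  by (cases "t = 0") (auto simp: power2_eq_square field_simps)

lemma norm_beta_le_of_Hmat_equations:
  fixes X :: "real^'p::finite^'n::finite" and a b r s :: "real^'p"
  assumes "alpha > 0" "n \<ge> 0"
    and r: "\<And>i. r $ i = (if i \<in> A then - b $ i else a $ i)"
    and s: "s = Gmat X alpha *v a + n *\<^sub>R b"
    and "norm r \<le> \<rho>" "norm s \<le> \<rho>"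
  shows "norm a \<le> (1 + (onorm (\<lambda>v. X *v v))\<^sup>2 + n) * \<rho> / alpha + \<rho>"
proof -
  let ?N = "onorm (\<lambda>v. X *v v)"
  define aA where "aA = (\<chi> i. if i \<in> A then a $ i else 0)"
  define aB where "aB = (\<chi> i. if i \<notin> A then r $ i else 0)"
  have a_split: "a = aA + aB"
    by (simp add: vec_eq_iff aA_def aB_def r)
  have "\<rho> \<ge> 0"
    using norm_ge_zero[of r] \<open>norm r \<le> \<rho>\<close> by linarith
  have aB_le: "norm aB \<le> \<rho>"
    using norm_restrict_le[of "\<lambda>i. i \<notin> A" r] \<open>norm r \<le> \<rho>\<close> unfolding aB_def by linarith
  have "inner aA b = - inner aA r"
    unfolding inner_vec_def aA_def sum_negf[symmetric] by (auto intro!: sum.cong simp: r)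
  moreover have "inner aA aB = 0"
    unfolding inner_vec_def aA_def aB_def by (simp add: sum.neutral)
  ultimately have "inner aA s = inner (X *v aA) (X *v aA) + alpha * inner aA aA
                                  + inner (X *v aA) (X *v aB) - n * inner aA r"
    unfolding s a_split
    by (simp add: inner_add_right matrix_vector_right_distrib inner_Gmat algebra_simps)
  then have "alpha * (norm aA)\<^sup>2 \<le> inner aA s - inner (X *v aA) (X *v aB) + n * inner aA r"
    by (simp add: power2_norm_eq_inner)
  also have "\<dots> \<le> norm aA * \<rho> + ?N\<^sup>2 * (norm aA * \<rho>) + n * (norm aA * \<rho>)"
    using abs_inner_le_of_norm_le[OF \<open>norm s \<le> \<rho>\<close>, of aA]
      abs_inner_matrix_vector_le[of X aA aB]
      mult_left_mono[OF mult_left_mono[OF aB_le norm_ge_zero[of aA]] zero_le_power2[of ?N]]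
      mult_left_mono[OF abs_inner_le_of_norm_le[OF \<open>norm r \<le> \<rho>\<close>, of aA] \<open>n \<ge> 0\<close>]
      mult_left_mono[OF abs_ge_self[of "inner aA r"] \<open>n \<ge> 0\<close>]
    by (simp only: abs_le_iff) linarith
  also have "\<dots> = norm aA * ((1 + ?N\<^sup>2 + n) * \<rho>)"
    by (simp add: algebra_simps)
  finally have "norm aA \<le> (1 + ?N\<^sup>2 + n) * \<rho> / alpha"
    using \<open>alpha > 0\<close> \<open>n \<ge> 0\<close> \<open>\<rho> \<ge> 0\<close>
    by (intro le_divide_of_mult_power2_le) auto
  then show ?thesis
    using norm_triangle_ineq[of aA aB] aB_le a_split by simp
qed

lemma norm_d_le_of_Hmat_equation:
  fixes X :: "real^'p::finite^'n::finite" and a b s :: "real^'p"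
  assumes "alpha \<ge> 0" "n \<ge> 1"
    and s: "s = Gmat X alpha *v a + n *\<^sub>R b"
    and "norm s \<le> \<rho>"
  shows "norm b \<le> \<rho> + ((onorm (\<lambda>v. X *v v))\<^sup>2 + alpha) * norm a"
proof -
  let ?N = "onorm (\<lambda>v. X *v v)"
  have "(norm b)\<^sup>2 \<le> n * (norm b)\<^sup>2"
    using mult_right_mono[OF \<open>n \<ge> 1\<close> zero_le_power2[of "norm b"]] by simp
  also have "\<dots> = inner b s - inner (X *v b) (X *v a) - alpha * inner b a"
    unfolding s by (simp add: inner_add_right inner_Gmat power2_norm_eq_inner)
  also have "\<dots> \<le> norm b * \<rho> + ?N\<^sup>2 * (norm b * norm a) + alpha * (norm b * norm a)"
    using abs_inner_le_of_norm_le[OF \<open>norm s \<le> \<rho>\<close>, of b]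
      abs_inner_matrix_vector_le[of X b a]
      mult_left_mono[OF Cauchy_Schwarz_ineq2[of b a] \<open>alpha \<ge> 0\<close>]
      mult_left_mono[OF abs_ge_minus_self[of "inner b a"] \<open>alpha \<ge> 0\<close>]
    by (simp only: abs_le_iff) linarith
  also have "\<dots> = norm b * (\<rho> + (?N\<^sup>2 + alpha) * norm a)"
    by (simp add: algebra_simps)
  finally have "1 * (norm b)\<^sup>2 \<le> norm b * (\<rho> + (?N\<^sup>2 + alpha) * norm a)"
    by simp
  moreover have "0 \<le> \<rho> + (?N\<^sup>2 + alpha) * norm a"
    using \<open>alpha \<ge> 0\<close> order_trans[OF norm_ge_zero \<open>norm s \<le> \<rho>\<close>]
    by (simp add: add_nonneg_nonneg mult_nonneg_nonneg)
  ultimately show ?thesis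
    using le_divide_of_mult_power2_le[of "norm b" _ 1] by simp
qed

lemma norm_le_Hmat_mult:
  fixes X :: "real^'p::finite^'n::finite"
  assumes "alpha > 0"
  shows "norm x \<le> (1 + 2 * (real CARD('n) + 1 + alpha + (onorm (\<lambda>v. X *v v))\<^sup>2)\<^sup>2 / alpha)
                     * norm (Hmat X lam alpha w *v x)"
proof -
  define N2 where "N2 = (onorm (\<lambda>v. X *v v))\<^sup>2"
  define n where "n = real CARD('n)"
  define c where "c = n + 1 + alpha + N2"
  define \<rho> where "\<rho> = norm (Hmat X lam alpha w *v x)"
  have "n \<ge> 1" "N2 \<ge> 0" "\<rho> \<ge> 0"
    by (simp_all add: n_def N2_def \<rho>_def)
  have r_le: "norm (beta_part (Hmat X lam alpha w *v x)) \<le> \<rho>"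
    and s_le: "norm (d_part (Hmat X lam alpha w *v x)) \<le> \<rho>"
    unfolding \<rho>_def by (rule norm_beta_part_le norm_d_part_le)+
  have s_eq: "d_part (Hmat X lam alpha w *v x) = Gmat X alpha *v beta_part x + n *\<^sub>R d_part x"
    unfolding n_def by (rule d_part_Hmat_mult)
  have "norm (beta_part x) \<le> (1 + N2 + n) * \<rho> / alpha + \<rho>"
    unfolding N2_def
    by (rule norm_beta_le_of_Hmat_equations[OF assms _ beta_part_Hmat_mult s_eq r_le s_le])
      (use \<open>n \<ge> 1\<close> in simp)
  also have "\<dots> \<le> c * \<rho> / alpha + \<rho>"
    using assms \<open>\<rho> \<ge> 0\<close> by (simp add: c_def divide_right_mono mult_right_mono)
  finally have beta_le: "norm (beta_part x) \<le> c * \<rho> / alpha + \<rho>" .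
  have d_le: "norm (d_part x) \<le> \<rho> + (N2 + alpha) * norm (beta_part x)"
    unfolding N2_def using assms \<open>n \<ge> 1\<close> by (intro norm_d_le_of_Hmat_equation[OF _ _ s_eq s_le]) auto
  have "norm x \<le> (1 + N2 + alpha) * norm (beta_part x) + \<rho>"
    using norm_le_beta_part_plus_d_part[of x] d_le by (simp add: algebra_simps)
  also have "\<dots> \<le> c * (c * \<rho> / alpha + \<rho>) + \<rho>"
    using beta_le assms \<open>n \<ge> 1\<close> \<open>N2 \<ge> 0\<close>
    by (intro add_right_mono mult_mono) (simp_all add: c_def)
  also have "\<dots> = (c\<^sup>2 / alpha + c + 1) * \<rho>"
    by (simp add: power2_eq_square algebra_simps)
  also have "\<dots> \<le> (1 + 2 * c\<^sup>2 / alpha) * \<rho>"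
  proof -
    have "alpha \<le> c" using \<open>n \<ge> 1\<close> \<open>N2 \<ge> 0\<close> by (simp add: c_def)
    then have "c \<le> c\<^sup>2 / alpha"
      using assms by (simp add: power2_eq_square field_simps mult_right_mono)
    then show ?thesis using \<open>\<rho> \<ge> 0\<close> by (intro mult_right_mono) auto
  qed
  finally show ?thesis by (simp add: c_def n_def N2_def \<rho>_def)
qed

lemma matrix_mult_matrix_inv: "invertible (A::real^'n::finite^'n) \<Longrightarrow> A ** matrix_inv A = mat 1"
  unfolding invertible_def matrix_inv_def
  by (rule someI_ex[where P="\<lambda>A'. A ** A' = mat 1 \<and> A' ** A = mat 1", THEN conjunct1])

lemma invertible_onorm_matrix_inv_le:
  fixes A :: "real^'m::finite^'m"
  assumes bound: "\<And>x. norm x \<le> K * norm (A *v x)"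
  shows "invertible A \<and> onorm (\<lambda>v. matrix_inv A *v v) \<le> K"
proof
  have "\<forall>x. A *v x = 0 \<longrightarrow> x = 0"
    using bound by (metis norm_le_zero_iff mult_zero_right norm_zero)
  then show inv: "invertible A"
    using matrix_left_invertible_ker invertible_left_inverse by blast
  show "onorm (\<lambda>v. matrix_inv A *v v) \<le> K"
  proof (rule onorm_le)
    fix v
    have "A *v (matrix_inv A *v v) = v"
      by (simp add: matrix_vector_mul_assoc matrix_mult_matrix_inv[OF inv])
    then show "norm (matrix_inv A *v v) \<le> K * norm v"
      using bound[of "matrix_inv A *v v"] by simp
  qed
qed

theorem theorem1:
  fixes X :: "real^'p::finite^'n::finite" and y :: "real^'n"
    and lam alpha :: real
  assumes "lam > 0" and "alpha > 0"
  shows "(\<forall>z. ((\<lambda>h. norm (Fmap X y lam alpha (z + h) - Fmap X y lam alpha z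
                          - Hmat X lam alpha (z + h) *v h) / norm h) \<longlongrightarrow> 0) (at 0))
       \<and> (\<forall>w. invertible (Hmat X lam alpha w)
              \<and> onorm (\<lambda>v. matrix_inv (Hmat X lam alpha w) *v v)
                  \<le> 1 + 2 * (real CARD('n) + 1 + alpha + (onorm (\<lambda>v. X *v v))\<^sup>2)\<^sup>2 / alpha)"
  using Fmap_Newton_differentiable[OF assms(1)]
    invertible_onorm_matrix_inv_le[OF norm_le_Hmat_mult[OF assms(2)]]
  by blast

end
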